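(* Let $A_1,\dots,A_n$ be events in a probability space and let $j,k\in\{1,\dots,n\}$, with $n>2-\delta_{jk}$, where $\delta_{jk}$ is the Kronecker delta. Then \[ \Pr\Big(\bigcup_{i=1}^n A_i\Big) \ge \frac{1}{n-2+\delta_{jk}}\Big(\sum_{i=1}^n\Pr(A_i) - \sum_{\substack{i=1\\ i\ne j}}^n\Pr(A_i\cap A_j) - \sum_{\substack{i=1\\ i\ne j,k}}^n\Pr(A_i\cap A_k) + \sum_{\substack{i=1\\ i\ne j,k}}^n\Pr(A_i\cap A_j\cap A_k)\Big). \] *)

theory Defs
  imports "HOL-Probability.Probability"
begin

end

theory Submission
  imports Defs
begin

(* The proof is by integrating a pointwise inequality between indicator
   functions.  Writing a i for the indicator of A i at a point and
   S for the sum of a i over I - {j,k}, the integrand of the right-hand side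
   factors as 1 - (1 - a j)(1 - a k)(1 - S).  This is at most 1 when A j or A k
   contains the point, and equals S otherwise; in both cases it is bounded by
   card (I - {j,k}) times the indicator of the union.  Integrating over a finite
   measure gives the bound for an arbitrary finite index set I, and the corollary
   is the case I = {1..n}, where card ({1..n} - {j,k}) = n - 2 + \<delta>_jk. *)

text \<open>For j \<noteq> k this is pure algebra;
  for j = k it uses that a j is idempotent.\<close>

lemma bonferroni_combination_factor:
  fixes a :: "'i \<Rightarrow> real"
  assumes "finite I" and "j \<in> I" and "k \<in> I" and "a j = 0 \<or> a j = 1"
  shows "(\<Sum>i\<in>I. a i) - (\<Sum>i\<in>I - {j}. a i * a j) - (\<Sum>i\<in>I - {j, k}. a i * a k)
           + (\<Sum>i\<in>I - {j, k}. a i * a j * a k)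
         = 1 - (1 - a j) * (1 - a k) * (1 - (\<Sum>i\<in>I - {j, k}. a i))"
    (is "?lhs = _")
proof -
  define S where "S = (\<Sum>i\<in>I - {j, k}. a i)"
  have pairs_k: "(\<Sum>i\<in>I - {j, k}. a i * a k) = S * a k"
    and triples: "(\<Sum>i\<in>I - {j, k}. a i * a j * a k) = S * a j * a k"
    unfolding S_def by (simp_all add: sum_distrib_right)
  show ?thesis
  proof (cases "j = k")
    case True
    have "(\<Sum>i\<in>I. a i) = a j + S"
      unfolding S_def using True assms(1,2) by (simp add: sum.remove)
    moreover have "(\<Sum>i\<in>I - {j}. a i * a j) = S * a j"
      unfolding S_def using True by (simp add: sum_distrib_right)
    moreover have "a j * a j = a j" using assms(4) by auto
    ultimately show ?thesis
      using True pairs_k triples unfolding S_def[symmetric] by (simp add: algebra_simps)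
  next
    case False
    have I_minus_j: "I - {j} = insert k (I - {j, k})" using assms(3) False by auto
    have "(\<Sum>i\<in>I. a i) = a j + a k + S"
      unfolding S_def using False assms(1-3) by (simp add: sum.remove I_minus_j)
    moreover have "(\<Sum>i\<in>I - {j}. a i * a j) = a k * a j + S * a j"
      unfolding S_def using assms(1) by (simp add: I_minus_j sum_distrib_right)
    ultimately show ?thesis
      using pairs_k triples unfolding S_def[symmetric] by (simp add: algebra_simps)
  qed
qed

lemma indicator_bonferroni_le:
  fixes A :: "'i \<Rightarrow> 'a set"
  assumes "finite I" and "j \<in> I" and "k \<in> I" and "I - {j, k} \<noteq> {}"
  shows "(\<Sum>i\<in>I. indicator (A i) x) - (\<Sum>i\<in>I - {j}. indicator (A i \<inter> A j) x)
           - (\<Sum>i\<in>I - {j, k}. indicator (A i \<inter> A k) x)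
           + (\<Sum>i\<in>I - {j, k}. indicator (A i \<inter> A j \<inter> A k) x)
         \<le> real (card (I - {j, k})) * (indicator (\<Union>i\<in>I. A i) x :: real)"
proof -
  define S where "S = (\<Sum>i\<in>I - {j, k}. indicator (A i) x :: real)"
  have "finite (I - {j, k})" using assms(1) by simp
  then have card_pos: "real (card (I - {j, k})) \<ge> 1"
    using assms(4) by (simp add: Suc_le_eq card_gt_0_iff)
  have lhs: "?thesis \<longleftrightarrow> 1 - (1 - indicator (A j) x) * (1 - indicator (A k) x) * (1 - S)
      \<le> real (card (I - {j, k})) * (indicator (\<Union>i\<in>I. A i) x :: real)"
    unfolding indicator_inter_arith S_def
    by (subst bonferroni_combination_factor[OF assms(1-3)]) (simp_all add: indicator_def)
  show ?thesis
  proof (cases "x \<in> A j \<or> x \<in> A k")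
    case True
    then have "x \<in> (\<Union>i\<in>I. A i)" using assms(2,3) by auto
    then show ?thesis using True card_pos lhs by auto
  next
    case False
    have "S \<le> (\<Sum>i\<in>I - {j, k}. 1)"
      unfolding S_def by (rule sum_mono) (simp add: indicator_def)
    then have "S \<le> real (card (I - {j, k}))" by simp
    moreover have "S = 0" if "x \<notin> (\<Union>i\<in>I. A i)" unfolding S_def using that by simp
    ultimately show ?thesis using False lhs by (cases "x \<in> (\<Union>i\<in>I. A i)") auto
  qed
qed

lemma (in finite_measure) measure_union_bonferroni:
  fixes A :: "'i \<Rightarrow> 'a set"
  assumes "finite I" and events: "\<And>i. i \<in> I \<Longrightarrow> A i \<in> sets M"
    and "j \<in> I" and "k \<in> I" and "I - {j, k} \<noteq> {}"
  shows "(\<Sum>i\<in>I. measure M (A i)) - (\<Sum>i\<in>I - {j}. measure M (A i \<inter> A j))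
           - (\<Sum>i\<in>I - {j, k}. measure M (A i \<inter> A k))
           + (\<Sum>i\<in>I - {j, k}. measure M (A i \<inter> A j \<inter> A k))
         \<le> real (card (I - {j, k})) * measure M (\<Union>i\<in>I. A i)"
proof -
  have int_ind: "integrable M (indicator B :: 'a \<Rightarrow> real)" if "B \<in> sets M" for B
    using that by (simp add: less_top[symmetric])
  have events_jk: "A i \<inter> A j \<in> sets M" "A i \<inter> A k \<in> sets M" "A i \<inter> A j \<inter> A k \<in> sets M"
    if "i \<in> I" for i using that events assms(3,4) by auto
  have union: "(\<Union>i\<in>I. A i) \<in> sets M" using assms(1) events by (intro sets.finite_UN) auto
  have int_sum: "integrable M (\<lambda>x. \<Sum>i\<in>J. indicator (B i) x :: real)"
    and integral_sum_indicator:
      "integral\<^sup>L M (\<lambda>x. \<Sum>i\<in>J. indicator (B i) x :: real) = (\<Sum>i\<in>J. measure M (B i))"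
    if "\<And>i. i \<in> J \<Longrightarrow> B i \<in> sets M" for J and B :: "'i \<Rightarrow> 'a set"
    using that int_ind by (auto simp: integral_sum sets.Int_space_eq2)
  note int_sums = int_sum[of I A] int_sum[of "I - {j}" "\<lambda>i. A i \<inter> A j"]
    int_sum[of "I - {j, k}" "\<lambda>i. A i \<inter> A k"] int_sum[of "I - {j, k}" "\<lambda>i. A i \<inter> A j \<inter> A k"]
  note integrals = integral_sum_indicator[of I A]
    integral_sum_indicator[of "I - {j}" "\<lambda>i. A i \<inter> A j"]
    integral_sum_indicator[of "I - {j, k}" "\<lambda>i. A i \<inter> A k"]
    integral_sum_indicator[of "I - {j, k}" "\<lambda>i. A i \<inter> A j \<inter> A k"]
  let ?f = "\<lambda>x. (\<Sum>i\<in>I. indicator (A i) x) - (\<Sum>i\<in>I - {j}. indicator (A i \<inter> A j) x)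
           - (\<Sum>i\<in>I - {j, k}. indicator (A i \<inter> A k) x)
           + (\<Sum>i\<in>I - {j, k}. indicator (A i \<inter> A j \<inter> A k) x) :: real"
  have "(\<Sum>i\<in>I. measure M (A i)) - (\<Sum>i\<in>I - {j}. measure M (A i \<inter> A j))
           - (\<Sum>i\<in>I - {j, k}. measure M (A i \<inter> A k))
           + (\<Sum>i\<in>I - {j, k}. measure M (A i \<inter> A j \<inter> A k)) = integral\<^sup>L M ?f"
    using int_sums integrals events events_jk by simp
  also have "\<dots> \<le> integral\<^sup>L M (\<lambda>x. real (card (I - {j, k})) * indicator (\<Union>i\<in>I. A i) x)"
    using int_sums events events_jk int_ind[OF union] indicator_bonferroni_le[OF assms(1) assms(3-5)]
    by (intro integral_mono) auto
  also have "\<dots> = real (card (I - {j, k})) * measure M (\<Union>i\<in>I. A i)"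
    using union by simp
  finally show ?thesis .
qed

theorem corollary3:
  fixes M :: "'a measure" and A :: "nat \<Rightarrow> 'a set" and n j k :: nat
  assumes "prob_space M"
    and "\<And>i. i \<in> {1..n} \<Longrightarrow> A i \<in> sets M"
    and "j \<in> {1..n}" and "k \<in> {1..n}"
    and "real n > 2 - (if j = k then 1 else 0)"
  shows "measure M (\<Union>i\<in>{1..n}. A i) \<ge>
    (1 / (real n - 2 + (if j = k then 1 else 0))) *
      ((\<Sum>i\<in>{1..n}. measure M (A i))
       - (\<Sum>i\<in>{1..n} - {j}. measure M (A i \<inter> A j))
       - (\<Sum>i\<in>{1..n} - {j, k}. measure M (A i \<inter> A k))
       + (\<Sum>i\<in>{1..n} - {j, k}. measure M (A i \<inter> A j \<inter> A k)))"
proof -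
  interpret prob_space M by fact
  define m where "m = real n - 2 + (if j = k then 1 else 0)"
  have m_pos: "m > 0" using assms(5) unfolding m_def by simp
  have card_rest: "real (card ({1..n} - {j, k})) = m"
    unfolding m_def using assms(3,4) by (cases "j = k") (simp_all add: card_Diff_subset of_nat_diff)
  then have "{1..n} - {j, k} \<noteq> {}" using m_pos by (metis card.empty of_nat_0 less_irrefl)
  from measure_union_bonferroni[OF _ assms(2-4) this] card_rest m_pos
  show ?thesis unfolding m_def[symmetric] by (simp add: divide_le_eq mult.commute)
qed

end
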